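(* A proper restriction semigroup $S$ is ultra proper if and only if its underlying right partial action $\circ$ is a partially defined action, that is, for all $s,t\in S/\sigma$ and $x\in P(S)$: $x\circ(st)$ is defined if and only if $x\circ s$ and $(x\circ s)\circ t$ are defined.
   Context: Restriction semigroup: algebra $(S,\cdot,{}^*,{}^+)$ with $(S,\cdot)$ a semigroup satisfying $xx^*=x$, $x^*y^*=y^*x^*$, $(xy^* )^*=x^*y^*$, $x^*y=y(xy)^*$, $x^+x=x$, $x^+y^+=y^+x^+$, $(x^+y)^+=x^+y^+$, $xy^+=(xy)^+x$, $(x^+)^*=x^+$, $(x^* )^+=x^*$. $P(S)=\{x^*\}$; $\sigma$ the least congruence identifying all projections; $S$ proper if ($a^*=b^*$, $a\sigma b$) or ($a^+=b^+$, $a\sigma b$) imply $a=b$. Underlying left partial action of $S/\sigma$ on $P(S)$: $t\cdot e$ is defined iff there is $a\in t$ with $a^*\ge e$, and then $t\cdot e=(ae)^+$. Underlying right partial action: $e\circ t$ is defined iff $e=t\cdot f$ for some $f$, and then $e\circ t=f$. A left partial action $\cdot$ is a partially defined action if for all $s,t,x$: $(st)\cdot x$ is defined iff $t\cdot x$ and $s\cdot(t\cdot x)$ are defined. $S$ is ultra proper if it is proper and its underlying left partial action is a partially defined action. *)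

theory Defs
  imports Main
begin

text \<open>A restriction semigroup is modelled on a whole type 'a, with multiplication m,
  right unary operation st (x*) and left unary operation pl (x+).\<close>

definition restriction_semigroup ::
  "('a \<Rightarrow> 'a \<Rightarrow> 'a) \<Rightarrow> ('a \<Rightarrow> 'a) \<Rightarrow> ('a \<Rightarrow> 'a) \<Rightarrow> bool" where
  "restriction_semigroup m st pl \<longleftrightarrow>
     (\<forall>x y z. m (m x y) z = m x (m y z)) \<and>
     (\<forall>x. m x (st x) = x) \<and>
     (\<forall>x y. m (st x) (st y) = m (st y) (st x)) \<and>
     (\<forall>x y. st (m x (st y)) = m (st x) (st y)) \<and>
     (\<forall>x y. m (st x) y = m y (st (m x y))) \<and>
     (\<forall>x. m (pl x) x = x) \<and>
     (\<forall>x y. m (pl x) (pl y) = m (pl y) (pl x)) \<and>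
     (\<forall>x y. pl (m (pl x) y) = m (pl x) (pl y)) \<and>
     (\<forall>x y. m x (pl y) = m (pl (m x y)) x) \<and>
     (\<forall>x. st (pl x) = pl x) \<and>
     (\<forall>x. pl (st x) = st x)"

definition projections :: "('a \<Rightarrow> 'a) \<Rightarrow> 'a set" where
  "projections st = range st"

definition proj_le :: "('a \<Rightarrow> 'a \<Rightarrow> 'a) \<Rightarrow> 'a \<Rightarrow> 'a \<Rightarrow> bool" where
  "proj_le m e f \<longleftrightarrow> e = m e f"

definition congruence :: "('a \<Rightarrow> 'a \<Rightarrow> 'a) \<Rightarrow> ('a \<times> 'a) set \<Rightarrow> bool" where
  "congruence m R \<longleftrightarrow> equiv UNIV R \<and>
     (\<forall>a b c. (a, b) \<in> R \<longrightarrow> (m c a, m c b) \<in> R \<and> (m a c, m b c) \<in> R)"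

definition sigma :: "('a \<Rightarrow> 'a \<Rightarrow> 'a) \<Rightarrow> ('a \<Rightarrow> 'a) \<Rightarrow> ('a \<times> 'a) set" where
  "sigma m st = \<Inter> {R. congruence m R \<and> projections st \<times> projections st \<subseteq> R}"

definition sigma_classes :: "('a \<Rightarrow> 'a \<Rightarrow> 'a) \<Rightarrow> ('a \<Rightarrow> 'a) \<Rightarrow> 'a set set" where
  "sigma_classes m st = UNIV // sigma m st"

definition class_mult ::
  "('a \<Rightarrow> 'a \<Rightarrow> 'a) \<Rightarrow> ('a \<Rightarrow> 'a) \<Rightarrow> 'a set \<Rightarrow> 'a set \<Rightarrow> 'a set" where
  "class_mult m st s t = {c. \<exists>a\<in>s. \<exists>b\<in>t. (c, m a b) \<in> sigma m st}"

definition proper :: "('a \<Rightarrow> 'a \<Rightarrow> 'a) \<Rightarrow> ('a \<Rightarrow> 'a) \<Rightarrow> ('a \<Rightarrow> 'a) \<Rightarrow> bool" where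
  "proper m st pl \<longleftrightarrow>
     (\<forall>a b. st a = st b \<and> (a, b) \<in> sigma m st \<longrightarrow> a = b) \<and>
     (\<forall>a b. pl a = pl b \<and> (a, b) \<in> sigma m st \<longrightarrow> a = b)"

text \<open>Underlying left partial action: t\<cdot>e is defined iff some a \<in> t has a* \<ge> e,
  and then t\<cdot>e = (ae)+ (independent of the choice of a).\<close>
definition lact ::
  "('a \<Rightarrow> 'a \<Rightarrow> 'a) \<Rightarrow> ('a \<Rightarrow> 'a) \<Rightarrow> ('a \<Rightarrow> 'a) \<Rightarrow> 'a set \<Rightarrow> 'a \<Rightarrow> 'a option" where
  "lact m st pl t e =
     (if \<exists>a\<in>t. proj_le m e (st a)
      then Some (pl (m (SOME a. a \<in> t \<and> proj_le m e (st a)) e))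
      else None)"

text \<open>Underlying right partial action: e\<circ>t is defined iff e = t\<cdot>f for some projection f,
  and then e\<circ>t = f (unique).\<close>
definition ract ::
  "('a \<Rightarrow> 'a \<Rightarrow> 'a) \<Rightarrow> ('a \<Rightarrow> 'a) \<Rightarrow> ('a \<Rightarrow> 'a) \<Rightarrow> 'a \<Rightarrow> 'a set \<Rightarrow> 'a option" where
  "ract m st pl e t =
     (if \<exists>f\<in>projections st. lact m st pl t f = Some e
      then Some (SOME f. f \<in> projections st \<and> lact m st pl t f = Some e)
      else None)"

definition left_pda :: "('a \<Rightarrow> 'a \<Rightarrow> 'a) \<Rightarrow> ('a \<Rightarrow> 'a) \<Rightarrow> ('a \<Rightarrow> 'a) \<Rightarrow> bool" where
  "left_pda m st pl \<longleftrightarrow>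
     (\<forall>s\<in>sigma_classes m st. \<forall>t\<in>sigma_classes m st. \<forall>x\<in>projections st.
        lact m st pl (class_mult m st s t) x \<noteq> None \<longleftrightarrow>
        (\<exists>y. lact m st pl t x = Some y \<and> lact m st pl s y \<noteq> None))"

definition right_pda :: "('a \<Rightarrow> 'a \<Rightarrow> 'a) \<Rightarrow> ('a \<Rightarrow> 'a) \<Rightarrow> ('a \<Rightarrow> 'a) \<Rightarrow> bool" where
  "right_pda m st pl \<longleftrightarrow>
     (\<forall>s\<in>sigma_classes m st. \<forall>t\<in>sigma_classes m st. \<forall>x\<in>projections st.
        ract m st pl x (class_mult m st s t) \<noteq> None \<longleftrightarrow>
        (\<exists>y. ract m st pl x s = Some y \<and> ract m st pl y t \<noteq> None))"

definition ultra_proper :: "('a \<Rightarrow> 'a \<Rightarrow> 'a) \<Rightarrow> ('a \<Rightarrow> 'a) \<Rightarrow> ('a \<Rightarrow> 'a) \<Rightarrow> bool" where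
  "ultra_proper m st pl \<longleftrightarrow> proper m st pl \<and> left_pda m st pl"

end

theory Submission
  imports Defs
begin

text \<open>Both partial actions are partially defined actions exactly when every element c that is
  \<sigma>-related to a product ab factors as c = a'b' with a' \<sigma> a, b' \<sigma> b and a'* = b'+.
  One direction restricts representatives of the two classes by suitable projections; for the
  other, the action conditions supply representatives whose restrictions meet at a common
  projection, and properness identifies their product with c, comparing c* for the left action
  and c+ for the right one.\<close>

lemma congruence_Inter:
  assumes "\<And>R. R \<in> F \<Longrightarrow> congruence m R"
  shows "congruence m (\<Inter>F)"
proof -
  have equiv: "equiv UNIV R"
    and compatible: "(a, b) \<in> R \<Longrightarrow> (m c a, m c b) \<in> R \<and> (m a c, m b c) \<in> R"
    if "R \<in> F" for R a b c
    using assms[OF that] unfolding congruence_def by blast+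
  have "equiv UNIV (\<Inter>F)"
  proof (rule equivI)
    show "\<Inter>F \<subseteq> UNIV \<times> UNIV" by simp
    show "refl (\<Inter>F)" using equiv by (blast elim: equivE dest: reflD intro: reflI)
    show "sym (\<Inter>F)" using equiv by (blast elim: equivE dest: symD intro: symI)
    show "trans (\<Inter>F)" using equiv by (blast elim: equivE dest: transD intro: transI)
  qed
  with compatible show ?thesis unfolding congruence_def by blast
qed

locale restriction_sgp =
  fixes m :: "'a \<Rightarrow> 'a \<Rightarrow> 'a" (infixl "\<cdot>" 70) and st pl :: "'a \<Rightarrow> 'a"
  assumes restriction_semigroup: "restriction_semigroup m st pl"
begin

lemma assoc: "(x \<cdot> y) \<cdot> z = x \<cdot> (y \<cdot> z)"
  using restriction_semigroup unfolding restriction_semigroup_def by blast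
lemma mult_st_right: "x \<cdot> st x = x"
  using restriction_semigroup unfolding restriction_semigroup_def by blast
lemma st_commute: "st x \<cdot> st y = st y \<cdot> st x"
  using restriction_semigroup unfolding restriction_semigroup_def by blast
lemma st_mult_st: "st (x \<cdot> st y) = st x \<cdot> st y"
  using restriction_semigroup unfolding restriction_semigroup_def by blast
lemma st_mult_left: "st x \<cdot> y = y \<cdot> st (x \<cdot> y)"
  using restriction_semigroup unfolding restriction_semigroup_def by blast
lemma pl_mult_left: "pl x \<cdot> x = x"
  using restriction_semigroup unfolding restriction_semigroup_def by blast
lemma pl_commute: "pl x \<cdot> pl y = pl y \<cdot> pl x"
  using restriction_semigroup unfolding restriction_semigroup_def by blast
lemma pl_pl_mult: "pl (pl x \<cdot> y) = pl x \<cdot> pl y"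
  using restriction_semigroup unfolding restriction_semigroup_def by blast
lemma mult_pl_right: "x \<cdot> pl y = pl (x \<cdot> y) \<cdot> x"
  using restriction_semigroup unfolding restriction_semigroup_def by blast
lemma st_pl: "st (pl x) = pl x"
  using restriction_semigroup unfolding restriction_semigroup_def by blast
lemma pl_st: "pl (st x) = st x"
  using restriction_semigroup unfolding restriction_semigroup_def by blast

abbreviation P where "P \<equiv> range st"

lemma st_st: "st (st x) = st x"
  using st_pl[of "st x"] by (simp only: pl_st)

lemma pl_pl: "pl (pl x) = pl x"
  using pl_st[of "pl x"] by (simp only: st_pl)

lemma st_proj: "e \<in> P \<Longrightarrow> st e = e"
  using st_st by auto

lemma pl_proj: "e \<in> P \<Longrightarrow> pl e = e"
  using pl_st by auto

lemma pl_in_P: "pl x \<in> P"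
  using st_pl[of x] by (metis rangeI)

lemma proj_idem: "e \<in> P \<Longrightarrow> e \<cdot> e = e"
  using mult_st_right[of e] st_proj[of e] by simp

lemma proj_commute: "e \<in> P \<Longrightarrow> f \<in> P \<Longrightarrow> e \<cdot> f = f \<cdot> e"
  using st_commute[of e f] st_proj[of e] st_proj[of f] by simp

lemma proj_le_refl: "e \<in> P \<Longrightarrow> proj_le m e e"
  unfolding proj_le_def by (simp add: proj_idem)

lemma proj_le_commute: "e \<in> P \<Longrightarrow> f \<in> P \<Longrightarrow> proj_le m e f \<Longrightarrow> f \<cdot> e = e"
  unfolding proj_le_def using proj_commute by metis

lemma st_mult_le: "proj_le m (st (x \<cdot> y)) (st y)"
proof -
  have "st (x \<cdot> y) = st ((x \<cdot> y) \<cdot> st y)" by (simp only: assoc mult_st_right)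
  also have "\<dots> = st (x \<cdot> y) \<cdot> st y" by (rule st_mult_st)
  finally show ?thesis unfolding proj_le_def .
qed

lemma pl_mult_le: "proj_le m (pl (x \<cdot> y)) (pl x)"
proof -
  have "pl (x \<cdot> y) = pl (pl x \<cdot> (x \<cdot> y))" by (simp only: assoc[symmetric] pl_mult_left)
  also have "\<dots> = pl x \<cdot> pl (x \<cdot> y)" by (rule pl_pl_mult)
  also have "\<dots> = pl (x \<cdot> y) \<cdot> pl x" by (rule pl_commute)
  finally show ?thesis unfolding proj_le_def .
qed

lemma st_mult: "st (x \<cdot> y) = st (st x \<cdot> y)"
proof -
  have "st (st x \<cdot> y) = st (y \<cdot> st (x \<cdot> y))" by (simp only: st_mult_left)
  also have "\<dots> = st y \<cdot> st (x \<cdot> y)" by (simp only: st_mult_st st_st)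
  also have "\<dots> = st (x \<cdot> y) \<cdot> st y" by (rule st_commute)
  also have "\<dots> = st (x \<cdot> y)" using st_mult_le[of x y] unfolding proj_le_def by (rule sym)
  finally show ?thesis by simp
qed

lemma pl_mult: "pl (x \<cdot> y) = pl (x \<cdot> pl y)"
proof -
  have "pl (x \<cdot> pl y) = pl (pl (x \<cdot> y) \<cdot> x)" by (simp only: mult_pl_right)
  also have "\<dots> = pl (x \<cdot> y) \<cdot> pl x" by (simp only: pl_pl_mult pl_pl)
  also have "\<dots> = pl x \<cdot> pl (x \<cdot> y)" by (rule pl_commute)
  also have "\<dots> = pl (x \<cdot> y)" using pl_mult_le[of x y] pl_commute unfolding proj_le_def by metis
  finally show ?thesis by simp
qed

lemma st_restrict:
  assumes "e \<in> P" and "proj_le m e (st a)"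
  shows "st (a \<cdot> e) = e"
proof -
  have "st (a \<cdot> e) = st a \<cdot> e" using st_mult_st[of a e] st_proj[OF assms(1)] by simp
  thus ?thesis using proj_le_commute[OF assms(1) _ assms(2)] by simp
qed

lemma st_matched_mult: "st a = pl b \<Longrightarrow> st (a \<cdot> b) = st b"
  using st_mult[of a b] by (simp add: pl_mult_left)

lemma pl_matched_mult:
  assumes "st a = pl b" shows "pl (a \<cdot> b) = pl a"
proof -
  have "pl (a \<cdot> b) = pl (a \<cdot> st a)" using pl_mult[of a b] assms by simp
  thus ?thesis by (simp add: mult_st_right)
qed

abbreviation \<sigma> where "\<sigma> \<equiv> sigma m st"

lemma sigma_congruence: "congruence m \<sigma>"
  unfolding sigma_def by (rule congruence_Inter) blast

lemma proj_sigma: "e \<in> P \<Longrightarrow> f \<in> P \<Longrightarrow> (e, f) \<in> \<sigma>"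
  unfolding sigma_def projections_def by blast

lemma sigma_equiv: "equiv UNIV \<sigma>"
  using sigma_congruence unfolding congruence_def by blast

lemma sigma_refl: "(a, a) \<in> \<sigma>"
  using sigma_equiv by (blast elim: equivE dest: reflD)

lemma sigma_sym: "(a, b) \<in> \<sigma> \<Longrightarrow> (b, a) \<in> \<sigma>"
  using sigma_equiv by (blast elim: equivE dest: symD)

lemma sigma_trans: "(a, b) \<in> \<sigma> \<Longrightarrow> (b, c) \<in> \<sigma> \<Longrightarrow> (a, c) \<in> \<sigma>"
  using sigma_equiv by (blast elim: equivE dest: transD)

lemma sigma_mult: "(a, a') \<in> \<sigma> \<Longrightarrow> (b, b') \<in> \<sigma> \<Longrightarrow> (a \<cdot> b, a' \<cdot> b') \<in> \<sigma>"
  using sigma_congruence sigma_trans unfolding congruence_def by blast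

lemma sigma_restrict: "e \<in> P \<Longrightarrow> (a, a \<cdot> e) \<in> \<sigma>"
  using sigma_mult[OF sigma_refl[of a] proj_sigma[of "st a" e]] by (simp add: mult_st_right)

lemma sigma_restrict_class: "a' \<in> \<sigma>``{a} \<Longrightarrow> e \<in> P \<Longrightarrow> (a, a' \<cdot> e) \<in> \<sigma>"
  using sigma_trans sigma_restrict by blast

lemma class_mult_Image: "class_mult m st (\<sigma>``{a}) (\<sigma>``{b}) = \<sigma>``{a \<cdot> b}"
  unfolding class_mult_def using sigma_mult sigma_refl sigma_sym sigma_trans by blast

lemma sigma_classesE:
  assumes "s \<in> sigma_classes m st" obtains a where "s = \<sigma>``{a}"
  using assms unfolding sigma_classes_def quotient_def by blast

lemma sigma_classesI: "\<sigma>``{a} \<in> sigma_classes m st"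
  unfolding sigma_classes_def quotient_def by blast

lemma lact_defined_iff: "lact m st pl t e \<noteq> None \<longleftrightarrow> (\<exists>a\<in>t. proj_le m e (st a))"
  unfolding lact_def by simp

lemma lact_SomeE:
  assumes "lact m st pl t e = Some y"
  obtains a where "a \<in> t" "proj_le m e (st a)" "y = pl (a \<cdot> e)"
proof -
  have ex: "\<exists>a. a \<in> t \<and> proj_le m e (st a)"
    using assms unfolding lact_def by (auto split: if_splits)
  hence "y = pl (m (SOME a. a \<in> t \<and> proj_le m e (st a)) e)"
    using assms unfolding lact_def by (simp add: Bex_def)
  thus ?thesis using someI_ex[OF ex] that by blast
qed

lemma ract_defined_iff: "ract m st pl x t \<noteq> None \<longleftrightarrow> (\<exists>f\<in>P. lact m st pl t f = Some x)"
  unfolding ract_def projections_def by simp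

lemma proj_le_st_mult:
  assumes x: "x \<in> P" and "proj_le m x (st b)" and "proj_le m (pl (b \<cdot> x)) (st a)"
  shows "proj_le m x (st (a \<cdot> b))"
proof -
  have "st a \<cdot> (b \<cdot> x) = (st a \<cdot> pl (b \<cdot> x)) \<cdot> (b \<cdot> x)"
    by (simp only: assoc pl_mult_left)
  also have "\<dots> = b \<cdot> x"
    using proj_le_commute[OF pl_in_P _ assms(3)] by (simp add: pl_mult_left)
  finally have "st (a \<cdot> (b \<cdot> x)) = st (b \<cdot> x)"
    using st_mult[of a "b \<cdot> x"] by simp
  hence "st (a \<cdot> b) \<cdot> x = x"
    using st_restrict[OF assms(1,2)] st_mult_st[of "a \<cdot> b" x] st_proj[OF x] by (simp add: assoc)
  thus ?thesis
    unfolding proj_le_def using proj_commute[OF x, of "st (a \<cdot> b)"] by simp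
qed

lemma pl_restrict_st:
  assumes x: "x \<in> P" and "proj_le m x (pl a)"
  shows "pl (a \<cdot> st (x \<cdot> a)) = x"
proof -
  have "a \<cdot> st (x \<cdot> a) = x \<cdot> a" using st_mult_left[of x a] st_proj[OF x] by simp
  moreover have "pl (x \<cdot> a) = x"
    using pl_pl_mult[of x a] pl_proj[OF x] assms(2) unfolding proj_le_def by simp
  ultimately show ?thesis by simp
qed

definition matched_factorisation :: bool where
  "matched_factorisation \<longleftrightarrow> (\<forall>a b c. (c, a \<cdot> b) \<in> \<sigma> \<longrightarrow>
     (\<exists>a' b'. (a, a') \<in> \<sigma> \<and> (b, b') \<in> \<sigma> \<and> c = a' \<cdot> b' \<and> st a' = pl b'))"

end

locale proper_restriction_sgp = restriction_sgp +
  assumes proper: "proper m st pl"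
begin

lemma st_sigma_inj: "st a = st b \<Longrightarrow> (a, b) \<in> \<sigma> \<Longrightarrow> a = b"
  using proper unfolding proper_def by blast

lemma pl_sigma_inj: "pl a = pl b \<Longrightarrow> (a, b) \<in> \<sigma> \<Longrightarrow> a = b"
  using proper unfolding proper_def by blast

lemma restrict_sigma_unique:
  assumes "(a, b) \<in> \<sigma>" "e \<in> P" "proj_le m e (st a)" "proj_le m e (st b)"
  shows "a \<cdot> e = b \<cdot> e"
  using st_sigma_inj[of "a \<cdot> e" "b \<cdot> e"] sigma_mult[OF assms(1) sigma_refl] st_restrict assms
  by simp

lemma lact_eq:
  assumes "e \<in> P" "a \<in> \<sigma>``{b}" "proj_le m e (st a)"
  shows "lact m st pl (\<sigma>``{b}) e = Some (pl (a \<cdot> e))"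
proof -
  have "lact m st pl (\<sigma>``{b}) e \<noteq> None" using assms lact_defined_iff by blast
  then obtain y where y: "lact m st pl (\<sigma>``{b}) e = Some y" by blast
  then obtain a' where a': "a' \<in> \<sigma>``{b}" "proj_le m e (st a')" "y = pl (a' \<cdot> e)"
    by (rule lact_SomeE)
  have "(a', a) \<in> \<sigma>" using a'(1) assms(2) sigma_sym sigma_trans by blast
  hence "a' \<cdot> e = a \<cdot> e" using restrict_sigma_unique a'(2) assms by blast
  thus ?thesis using y a'(3) by simp
qed

lemma lact_inj:
  assumes "f \<in> P" "g \<in> P"
    and "lact m st pl (\<sigma>``{b}) f = Some x" "lact m st pl (\<sigma>``{b}) g = Some x"
  shows "f = g"
proof -
  obtain a where a: "a \<in> \<sigma>``{b}" "proj_le m f (st a)" "x = pl (a \<cdot> f)"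
    using lact_SomeE[OF assms(3)] .
  obtain a' where a': "a' \<in> \<sigma>``{b}" "proj_le m g (st a')" "x = pl (a' \<cdot> g)"
    using lact_SomeE[OF assms(4)] .
  have "(a \<cdot> f, a' \<cdot> g) \<in> \<sigma>"
    using sigma_restrict_class[OF a(1) assms(1)] sigma_restrict_class[OF a'(1) assms(2)]
      sigma_sym sigma_trans by blast
  hence "a \<cdot> f = a' \<cdot> g" using pl_sigma_inj a(3) a'(3) by simp
  thus ?thesis using st_restrict[OF assms(1) a(2)] st_restrict[OF assms(2) a'(2)] by simp
qed

lemma ract_eq_Some_iff:
  "ract m st pl x (\<sigma>``{b}) = Some y \<longleftrightarrow> y \<in> P \<and> lact m st pl (\<sigma>``{b}) y = Some x"
proof -
  let ?Q = "\<lambda>f. f \<in> P \<and> lact m st pl (\<sigma>``{b}) f = Some x"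
  have ract: "ract m st pl x (\<sigma>``{b}) = (if \<exists>f. ?Q f then Some (SOME f. ?Q f) else None)"
    unfolding ract_def projections_def Bex_def ..
  show ?thesis
  proof (cases "\<exists>f. ?Q f")
    case True
    have Q: "?Q (SOME f. ?Q f)" using True by (rule someI_ex)
    have "?Q y \<longleftrightarrow> (SOME f. ?Q f) = y"
    proof
      show "?Q y \<Longrightarrow> (SOME f. ?Q f) = y" using Q lact_inj by blast
    qed (use Q in blast)
    thus ?thesis unfolding ract if_P[OF True] by simp
  next
    case False
    thus ?thesis unfolding ract if_not_P[OF False] by blast
  qed
qed

lemma ract_eq:
  assumes x: "x \<in> P" and "proj_le m x (pl a')" and "a' \<in> \<sigma>``{a}"
  shows "ract m st pl x (\<sigma>``{a}) = Some (st (x \<cdot> a'))"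
proof -
  have "lact m st pl (\<sigma>``{a}) (st (x \<cdot> a')) = Some (pl (a' \<cdot> st (x \<cdot> a')))"
    using lact_eq[OF _ assms(3) st_mult_le] by simp
  also have "\<dots> = Some x" using pl_restrict_st[OF assms(1,2)] by simp
  finally show ?thesis using ract_eq_Some_iff by simp
qed

lemma sigma_product_factorisation:
  assumes c: "(c, a \<cdot> b) \<in> \<sigma>" and a1: "a1 \<in> \<sigma>``{a}" and b1: "b1 \<in> \<sigma>``{b}"
    and y: "y \<in> P" and f: "f \<in> P"
    and y_le: "proj_le m y (st a1)" and f_le: "proj_le m f (st b1)" and y_eq: "y = pl (b1 \<cdot> f)"
    and "st c = f \<or> pl c = pl (a1 \<cdot> y)"
  shows "\<exists>a' b'. (a, a') \<in> \<sigma> \<and> (b, b') \<in> \<sigma> \<and> c = a' \<cdot> b' \<and> st a' = pl b'"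
proof -
  have aa: "(a, a1 \<cdot> y) \<in> \<sigma>" using sigma_restrict_class[OF a1 y] .
  have bb: "(b, b1 \<cdot> f) \<in> \<sigma>" using sigma_restrict_class[OF b1 f] .
  have matched: "st (a1 \<cdot> y) = pl (b1 \<cdot> f)" using st_restrict[OF y y_le] y_eq by simp
  have "(a1 \<cdot> y \<cdot> (b1 \<cdot> f), c) \<in> \<sigma>" using sigma_mult[OF aa bb] c sigma_sym sigma_trans by blast
  moreover have "st (a1 \<cdot> y \<cdot> (b1 \<cdot> f)) = f" "pl (a1 \<cdot> y \<cdot> (b1 \<cdot> f)) = pl (a1 \<cdot> y)"
    using st_matched_mult[OF matched] pl_matched_mult[OF matched] st_restrict[OF f f_le] by simp_all
  ultimately have "c = a1 \<cdot> y \<cdot> (b1 \<cdot> f)"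
    using assms(9) st_sigma_inj pl_sigma_inj by metis
  thus ?thesis using aa bb matched by blast
qed

lemma matched_factorisation_if_left_pda:
  assumes "left_pda m st pl" shows matched_factorisation
  unfolding matched_factorisation_def
proof (intro allI impI)
  fix a b c assume c: "(c, a \<cdot> b) \<in> \<sigma>"
  have "lact m st pl (class_mult m st (\<sigma>``{a}) (\<sigma>``{b})) (st c) \<noteq> None"
    unfolding class_mult_Image lact_defined_iff using c sigma_sym proj_le_refl by blast
  then obtain y where y: "lact m st pl (\<sigma>``{b}) (st c) = Some y"
    and "lact m st pl (\<sigma>``{a}) y \<noteq> None"
    using assms sigma_classesI unfolding left_pda_def projections_def by blast
  then obtain a1 where a1: "a1 \<in> \<sigma>``{a}" "proj_le m y (st a1)" using lact_defined_iff by blast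
  obtain b1 where b1: "b1 \<in> \<sigma>``{b}" "proj_le m (st c) (st b1)" "y = pl (b1 \<cdot> st c)"
    using lact_SomeE[OF y] .
  show "\<exists>a' b'. (a, a') \<in> \<sigma> \<and> (b, b') \<in> \<sigma> \<and> c = a' \<cdot> b' \<and> st a' = pl b'"
    using sigma_product_factorisation[OF c a1(1) b1(1) _ _ a1(2) b1(2,3)] b1(3) pl_in_P by blast
qed

lemma matched_factorisation_if_right_pda:
  assumes "right_pda m st pl" shows matched_factorisation
  unfolding matched_factorisation_def
proof (intro allI impI)
  fix a b c assume c: "(c, a \<cdot> b) \<in> \<sigma>"
  have "lact m st pl (\<sigma>``{a \<cdot> b}) (st c) = Some (pl (c \<cdot> st c))"
    using lact_eq[OF _ _ proj_le_refl] c sigma_sym by simp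
  hence "ract m st pl (pl c) (class_mult m st (\<sigma>``{a}) (\<sigma>``{b})) \<noteq> None"
    unfolding class_mult_Image ract_defined_iff by (auto simp: mult_st_right)
  then obtain y where "ract m st pl (pl c) (\<sigma>``{a}) = Some y"
    and "ract m st pl y (\<sigma>``{b}) \<noteq> None"
    using assms sigma_classesI pl_in_P unfolding right_pda_def projections_def by blast
  then obtain f where y: "y \<in> P" "lact m st pl (\<sigma>``{a}) y = Some (pl c)"
    and f: "f \<in> P" "lact m st pl (\<sigma>``{b}) f = Some y"
    using ract_eq_Some_iff ract_defined_iff by blast
  obtain a1 where a1: "a1 \<in> \<sigma>``{a}" "proj_le m y (st a1)" "pl c = pl (a1 \<cdot> y)"
    using lact_SomeE[OF y(2)] .
  obtain b1 where b1: "b1 \<in> \<sigma>``{b}" "proj_le m f (st b1)" "y = pl (b1 \<cdot> f)"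
    using lact_SomeE[OF f(2)] .
  show "\<exists>a' b'. (a, a') \<in> \<sigma> \<and> (b, b') \<in> \<sigma> \<and> c = a' \<cdot> b' \<and> st a' = pl b'"
    using sigma_product_factorisation[OF c a1(1) b1(1) y(1) f(1) a1(2) b1(2,3)] a1(3) by blast
qed

lemma matched_factorisationE:
  assumes matched_factorisation and "c \<in> \<sigma>``{a \<cdot> b}"
  obtains a' b' where "a' \<in> \<sigma>``{a}" "b' \<in> \<sigma>``{b}" "c = a' \<cdot> b'" "st a' = pl b'"
  using assms sigma_sym unfolding matched_factorisation_def by blast

lemma left_pda_if_matched_factorisation:
  assumes matched_factorisation shows "left_pda m st pl"
  unfolding left_pda_def projections_def
proof (intro ballI)
  fix s t x assume "s \<in> sigma_classes m st" "t \<in> sigma_classes m st" and x: "x \<in> P"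
  then obtain a b where s: "s = \<sigma>``{a}" and t: "t = \<sigma>``{b}" by (metis sigma_classesE)
  show "lact m st pl (class_mult m st s t) x \<noteq> None \<longleftrightarrow>
        (\<exists>y. lact m st pl t x = Some y \<and> lact m st pl s y \<noteq> None)"
  proof
    assume "lact m st pl (class_mult m st s t) x \<noteq> None"
    then obtain c where c: "c \<in> \<sigma>``{a \<cdot> b}" and x_le: "proj_le m x (st c)"
      unfolding s t class_mult_Image lact_defined_iff by blast
    obtain a' b' where ab: "a' \<in> \<sigma>``{a}" "b' \<in> \<sigma>``{b}" "c = a' \<cdot> b'" "st a' = pl b'"
      using matched_factorisationE[OF assms c] .
    have "proj_le m x (st b')" using x_le ab st_matched_mult by simp
    hence "lact m st pl t x = Some (pl (b' \<cdot> x))" unfolding t using lact_eq[OF x ab(2)] by simp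
    moreover have "proj_le m (pl (b' \<cdot> x)) (st a')" using pl_mult_le ab(4) by simp
    ultimately show "\<exists>y. lact m st pl t x = Some y \<and> lact m st pl s y \<noteq> None"
      unfolding s lact_defined_iff using ab(1) by blast
  next
    assume "\<exists>y. lact m st pl t x = Some y \<and> lact m st pl s y \<noteq> None"
    then obtain y where y: "lact m st pl t x = Some y" and "lact m st pl s y \<noteq> None" by blast
    then obtain a1 where a1: "a1 \<in> s" "proj_le m y (st a1)" using lact_defined_iff by blast
    obtain b1 where b1: "b1 \<in> t" "proj_le m x (st b1)" "y = pl (b1 \<cdot> x)"
      using lact_SomeE[OF y] .
    have "proj_le m x (st (a1 \<cdot> b1))" using proj_le_st_mult[OF x b1(2)] a1(2) b1(3) by simp
    moreover have "a1 \<cdot> b1 \<in> \<sigma>``{a \<cdot> b}" using a1(1) b1(1) s t sigma_mult by simp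
    ultimately show "lact m st pl (class_mult m st s t) x \<noteq> None"
      unfolding s t class_mult_Image lact_defined_iff by blast
  qed
qed

lemma right_pda_if_matched_factorisation:
  assumes matched_factorisation shows "right_pda m st pl"
  unfolding right_pda_def projections_def
proof (intro ballI)
  fix s t x assume "s \<in> sigma_classes m st" "t \<in> sigma_classes m st" and x: "x \<in> P"
  then obtain a b where s: "s = \<sigma>``{a}" and t: "t = \<sigma>``{b}" by (metis sigma_classesE)
  show "ract m st pl x (class_mult m st s t) \<noteq> None \<longleftrightarrow>
        (\<exists>y. ract m st pl x s = Some y \<and> ract m st pl y t \<noteq> None)"
  proof
    assume "ract m st pl x (class_mult m st s t) \<noteq> None"
    then obtain f where "f \<in> P" and "lact m st pl (\<sigma>``{a \<cdot> b}) f = Some x"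
      unfolding s t class_mult_Image ract_defined_iff by blast
    then obtain c where c: "c \<in> \<sigma>``{a \<cdot> b}" and x_eq: "x = pl (c \<cdot> f)"
      using lact_SomeE by metis
    obtain a' b' where ab: "a' \<in> \<sigma>``{a}" "b' \<in> \<sigma>``{b}" "c = a' \<cdot> b'" "st a' = pl b'"
      using matched_factorisationE[OF assms c] .
    have "x = pl (a' \<cdot> (b' \<cdot> f))" using x_eq ab(3) by (simp add: assoc)
    hence "proj_le m x (pl a')" using pl_mult_le by simp
    hence ract_s: "ract m st pl x s = Some (st (x \<cdot> a'))"
      unfolding s using ract_eq[OF x _ ab(1)] by simp
    have "proj_le m (st (x \<cdot> a')) (pl b')" using st_mult_le[of x a'] ab(4) by simp
    hence "ract m st pl (st (x \<cdot> a')) t \<noteq> None" unfolding t using ract_eq[OF _ _ ab(2)] by simp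
    with ract_s show "\<exists>y. ract m st pl x s = Some y \<and> ract m st pl y t \<noteq> None" by blast
  next
    assume "\<exists>y. ract m st pl x s = Some y \<and> ract m st pl y t \<noteq> None"
    then obtain y where "ract m st pl x s = Some y" and "ract m st pl y t \<noteq> None" by blast
    then obtain f where "lact m st pl s y = Some x" and f: "f \<in> P" "lact m st pl t f = Some y"
      unfolding s t ract_eq_Some_iff ract_defined_iff by blast
    then obtain a1 b1 where a1: "a1 \<in> s" "proj_le m y (st a1)" "x = pl (a1 \<cdot> y)"
      and b1: "b1 \<in> t" "proj_le m f (st b1)" "y = pl (b1 \<cdot> f)"
      using lact_SomeE by metis
    have "proj_le m f (st (a1 \<cdot> b1))" using proj_le_st_mult[OF f(1) b1(2)] a1(2) b1(3) by simp
    moreover have "a1 \<cdot> b1 \<in> \<sigma>``{a \<cdot> b}" using a1(1) b1(1) s t sigma_mult by simp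
    ultimately have "lact m st pl (\<sigma>``{a \<cdot> b}) f = Some (pl (a1 \<cdot> b1 \<cdot> f))"
      using lact_eq[OF f(1)] by blast
    also have "pl (a1 \<cdot> b1 \<cdot> f) = x"
      using pl_mult[of a1 "b1 \<cdot> f"] a1(3) b1(3) by (simp add: assoc)
    finally show "ract m st pl x (class_mult m st s t) \<noteq> None"
      unfolding s t class_mult_Image ract_defined_iff using f(1) by blast
  qed
qed

end

theorem lemma3p9:
  fixes m :: "'a \<Rightarrow> 'a \<Rightarrow> 'a" and st pl :: "'a \<Rightarrow> 'a"
  assumes "restriction_semigroup m st pl"
    and "proper m st pl"
  shows "ultra_proper m st pl \<longleftrightarrow> right_pda m st pl"
proof -
  interpret proper_restriction_sgp m st pl using assms by unfold_locales
  have "left_pda m st pl \<longleftrightarrow> right_pda m st pl"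
    using matched_factorisation_if_left_pda matched_factorisation_if_right_pda
      left_pda_if_matched_factorisation right_pda_if_matched_factorisation by blast
  thus ?thesis unfolding ultra_proper_def using assms(2) by blast
qed

end
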